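(* Let $G$ be a finite group. If the difference graph $\mathcal{D}(G)$ is null (has no edges), then the power graph $\mathcal{P}(G)$ is a cograph, i.e. it contains no induced subgraph isomorphic to the path $P_4$ on four vertices.
   Context: For a finite group $G$ with identity $e$: the intersection power graph $\mathcal{G}_I(G)$ has vertex set $G$, two distinct non-identity vertices $x,y$ being adjacent iff $\langle x\rangle\cap\langle y\rangle\neq\{e\}$, and $e$ being adjacent to every other vertex. The power graph $\mathcal{P}(G)$ has vertex set $G$, two distinct vertices being adjacent iff one is a power of the other. The difference graph $\mathcal{D}(G)$ has edge set $E(\mathcal{G}_I(G))\setminus E(\mathcal{P}(G))$ with isolated vertices removed. *)

theory Defs
  imports "HOL-Algebra.Algebra"
begin

definition power_adj :: "('a, 'b) monoid_scheme \<Rightarrow> 'a \<Rightarrow> 'a \<Rightarrow> bool" where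
  "power_adj G x y \<longleftrightarrow> x \<in> carrier G \<and> y \<in> carrier G \<and> x \<noteq> y \<and>
     ((\<exists>k::int. y = x [^]\<^bsub>G\<^esub> k) \<or> (\<exists>k::int. x = y [^]\<^bsub>G\<^esub> k))"

definition inter_power_adj :: "('a, 'b) monoid_scheme \<Rightarrow> 'a \<Rightarrow> 'a \<Rightarrow> bool" where
  "inter_power_adj G x y \<longleftrightarrow> x \<in> carrier G \<and> y \<in> carrier G \<and> x \<noteq> y \<and>
     (x = \<one>\<^bsub>G\<^esub> \<or> y = \<one>\<^bsub>G\<^esub> \<or>
      generate G {x} \<inter> generate G {y} \<noteq> {\<one>\<^bsub>G\<^esub>})"

text \<open>The difference graph is null: its edge set E(G_I) minus E(P) is empty
  (removing isolated vertices does not affect the edge set).\<close>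
definition difference_graph_null :: "('a, 'b) monoid_scheme \<Rightarrow> bool" where
  "difference_graph_null G \<longleftrightarrow>
     {{x, y} | x y. inter_power_adj G x y} - {{x, y} | x y. power_adj G x y} = {}"

definition cograph :: "'a set \<Rightarrow> ('a \<Rightarrow> 'a \<Rightarrow> bool) \<Rightarrow> bool" where
  "cograph V E \<longleftrightarrow> \<not> (\<exists>a\<in>V. \<exists>b\<in>V. \<exists>c\<in>V. \<exists>d\<in>V.
      distinct [a, b, c, d] \<and> E a b \<and> E b c \<and> E c d \<and>
      \<not> E a c \<and> \<not> E a d \<and> \<not> E b d)"

end

theory Submission
  imports Defs
begin

text \<open>Write \<open>\<langle>x\<rangle>\<close> for the cyclic subgroup generated by \<open>x\<close>. Adjacent vertices of the power
  graph have comparable cyclic subgroups, and if the difference graph is null then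
  non-adjacent vertices are non-identity elements with \<open>\<langle>x\<rangle> \<inter> \<langle>y\<rangle> = 1\<close>.
  For an induced path \<open>a - b - c - d\<close> this gives four nontrivial subgroups with
  \<open>\<langle>a\<rangle>, \<langle>b\<rangle>\<close>, \<open>\<langle>b\<rangle>, \<langle>c\<rangle>\<close>, \<open>\<langle>c\<rangle>, \<langle>d\<rangle>\<close> comparable and \<open>\<langle>a\<rangle> \<inter> \<langle>c\<rangle> = \<langle>b\<rangle> \<inter> \<langle>d\<rangle> = 1\<close>.
  If \<open>\<langle>b\<rangle> \<subseteq> \<langle>c\<rangle>\<close>, then \<open>\<langle>b\<rangle> \<subseteq> \<langle>a\<rangle>\<close> would force \<open>\<langle>b\<rangle> \<subseteq> \<langle>a\<rangle> \<inter> \<langle>c\<rangle>\<close>, so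
  \<open>\<langle>a\<rangle> \<subseteq> \<langle>b\<rangle> \<subseteq> \<langle>c\<rangle>\<close>, contradicting \<open>\<langle>a\<rangle> \<inter> \<langle>c\<rangle> = 1\<close>; the case \<open>\<langle>c\<rangle> \<subseteq> \<langle>b\<rangle>\<close> is symmetric.\<close>

lemma no_comparable_path_with_small_skip_intersections:
  assumes "A \<subseteq> B \<or> B \<subseteq> A" "B \<subseteq> C \<or> C \<subseteq> B" "C \<subseteq> D \<or> D \<subseteq> C"
    and "A \<inter> C \<subseteq> Z" "B \<inter> D \<subseteq> Z"
    and "\<not> A \<subseteq> Z" "\<not> B \<subseteq> Z" "\<not> C \<subseteq> Z" "\<not> D \<subseteq> Z"
  shows False
  using assms by blast

lemma (in group) power_adj_imp_generate_comparable:
  assumes "power_adj G x y"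
  shows "generate G {x} \<subseteq> generate G {y} \<or> generate G {y} \<subseteq> generate G {x}"
proof -
  have pow_incl: "generate G {u [^] (k::int)} \<subseteq> generate G {u}" if "u \<in> carrier G" for u k
    using that by (intro generate_subgroup_incl generate_is_subgroup) (auto simp: generate_pow)
  from assms show ?thesis
    unfolding power_adj_def using pow_incl by blast
qed

lemma inter_power_adj_imp_power_adj:
  assumes "difference_graph_null G" "inter_power_adj G x y"
  shows "power_adj G x y"
proof -
  from assms obtain u v where "{x, y} = {u, v}" "power_adj G u v"
    unfolding difference_graph_null_def by blast
  then have "power_adj G x y \<or> power_adj G y x"
    by (metis doubleton_eq_iff)
  then show ?thesis
    unfolding power_adj_def by blast
qed

lemma (in group) non_power_adj_imp_generate_inter_trivial:
  assumes "difference_graph_null G" "x \<in> carrier G" "y \<in> carrier G" "x \<noteq> y"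
    and "\<not> power_adj G x y"
  shows "x \<noteq> \<one>" "y \<noteq> \<one>" "generate G {x} \<inter> generate G {y} = {\<one>}"
  using assms inter_power_adj_imp_power_adj[OF assms(1)]
  unfolding inter_power_adj_def by auto

theorem proposition2p5:
  fixes G :: "('a, 'b) monoid_scheme"
  assumes "group G" and "finite (carrier G)"
    and "difference_graph_null G"
  shows "cograph (carrier G) (power_adj G)"
  unfolding cograph_def
proof clarify
  interpret group G by fact
  fix a b c d
  assume "a \<in> carrier G" "b \<in> carrier G" "c \<in> carrier G" "d \<in> carrier G"
    and "distinct [a, b, c, d]"
    and "power_adj G a b" "power_adj G b c" "power_adj G c d"
    and "\<not> power_adj G a c" "\<not> power_adj G a d" "\<not> power_adj G b d"
  then have ac: "a \<noteq> \<one>\<^bsub>G\<^esub>" "c \<noteq> \<one>\<^bsub>G\<^esub>" "generate G {a} \<inter> generate G {c} = {\<one>\<^bsub>G\<^esub>}"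
    and bd: "b \<noteq> \<one>\<^bsub>G\<^esub>" "d \<noteq> \<one>\<^bsub>G\<^esub>" "generate G {b} \<inter> generate G {d} = {\<one>\<^bsub>G\<^esub>}"
    using non_power_adj_imp_generate_inter_trivial[OF assms(3)] by simp_all
  have nontrivial: "\<not> generate G {x} \<subseteq> {\<one>\<^bsub>G\<^esub>}" if "x \<noteq> \<one>\<^bsub>G\<^esub>" for x
    using that generate.incl[of x "{x}" G] by blast
  show False
  proof (rule no_comparable_path_with_small_skip_intersections)
    show "generate G {a} \<subseteq> generate G {b} \<or> generate G {b} \<subseteq> generate G {a}"
      "generate G {b} \<subseteq> generate G {c} \<or> generate G {c} \<subseteq> generate G {b}"
      "generate G {c} \<subseteq> generate G {d} \<or> generate G {d} \<subseteq> generate G {c}"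
      by (rule power_adj_imp_generate_comparable, fact)+
  qed (use ac bd nontrivial in auto)
qed

end
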